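(* Let $n=2m-1$, $m\ge1$, let $\mathcal{C}$ be the set of maximal flags and $\mathcal{P}$ the set of points of $\mathrm{PG}(n,q)$. For $i\in[n+1]$ let $T_i$ be the $|\mathcal{C}|\times|\mathcal{P}|$ matrix with $T_i(c,X)=1$ if $c$ has type $i$ with respect to $X$ and $0$ otherwise, and for $j\in[m]$ let $F_j=q^j\sum_{i=m-j+1}^{m}T_i-\sum_{i=m+1}^{m+j}T_i$. Let $E_1=I_{\mathcal{P}}-\frac1{|\mathcal{P}|}J_{\mathcal{P}}$. Then for every $j\in[m]$ there is a non-zero constant $\alpha_j$ with $T_{m-j+1}^\top F_j=\alpha_jE_1$, and $T_h^\top F_j=0$ for all $h<m-j+1$.
   Context: A maximal flag of $\mathrm{PG}(n,q)$ is $(U_1,\dots,U_n)$ with $U_1\subset\cdots\subset U_n$ subspaces of $\mathbb{F}_q^{n+1}$, $\dim U_i=i$. Its type with respect to a point $X$ is the smallest $k\in[n]$ with $X\subseteq U_k$, and $n+1$ otherwise. $I_{\mathcal{P}}$ and $J_{\mathcal{P}}$ are the identity and all-one matrices indexed by $\mathcal{P}$. *)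

theory Defs
  imports "HOL-Analysis.Analysis"
begin

text \<open>The ambient space is 'a^'n with 'a a finite field F_q and CARD('n) = n+1.
  Projective dimension n = CARD('n) - 1.\<close>

definition pg_points :: "('a::field ^ 'n) set set" where
  "pg_points = {U. vec.subspace U \<and> vec.dim U = 1}"

text \<open>A maximal flag (U_1,...,U_n) is represented as a list c of length n
  with c ! (i-1) = U_i.\<close>
definition max_flags :: "('a::field ^ 'n) set list set" where
  "max_flags = {c. length c = CARD('n) - 1 \<and>
      (\<forall>i<length c. vec.subspace (c ! i) \<and> vec.dim (c ! i) = i + 1) \<and>
      (\<forall>i. i + 1 < length c \<longrightarrow> c ! i \<subset> c ! (i + 1))}"

definition flag_type :: "('a::field ^ 'n) set list \<Rightarrow> ('a ^ 'n) set \<Rightarrow> nat" where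
  "flag_type c X = (if \<exists>k\<in>{1..length c}. X \<subseteq> c ! (k - 1)
      then LEAST k. k \<in> {1..length c} \<and> X \<subseteq> c ! (k - 1)
      else length c + 1)"

definition Tmat :: "nat \<Rightarrow> ('a::field ^ 'n) set list \<Rightarrow> ('a ^ 'n) set \<Rightarrow> real" where
  "Tmat i c X = (if flag_type c X = i then 1 else 0)"

definition Fmat :: "nat \<Rightarrow> nat \<Rightarrow> ('a::{finite,field} ^ 'n) set list \<Rightarrow> ('a ^ 'n) set \<Rightarrow> real" where
  "Fmat m j c X = real (CARD('a)) ^ j * (\<Sum>i = m - j + 1..m. Tmat i c X)
                  - (\<Sum>i = m + 1..m + j. Tmat i c X)"

definition E1mat :: "('a::field ^ 'n) set \<Rightarrow> ('a ^ 'n) set \<Rightarrow> real" where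
  "E1mat X Y = (if X = Y then 1 else 0) - 1 / real (card (pg_points :: ('a ^ 'n) set set))"

definition transp_mult ::
  "(('a::field ^ 'n) set list \<Rightarrow> ('a ^ 'n) set \<Rightarrow> real) \<Rightarrow>
   (('a ^ 'n) set list \<Rightarrow> ('a ^ 'n) set \<Rightarrow> real) \<Rightarrow> ('a ^ 'n) set \<Rightarrow> ('a ^ 'n) set \<Rightarrow> real" where
  "transp_mult A B X Y = (\<Sum>c\<in>(max_flags :: ('a ^ 'n) set list set). A c X * B c Y)"

end

(*
  Let q = |F_q|, N_{h,i} = T_h^T T_i and D_i = q T_i - T_{i+1}.  The argument lives on i-panels:
  the q + 1 flags that agree with a given flag except possibly in their i-dimensional member.
  Along a panel the type with respect to X is constant unless it is i or i + 1, while D_i(-, Y)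
  sums to zero over the panel: either all terms vanish, or Y lies in exactly one of the q + 1
  candidate members, which gives type i, and the other q give type i + 1.  Double counting over
  panels gives T_h^T D_i = 0 for h not in {i, i + 1}, that is N_{h,i+1} = q N_{h,i}.

  Since T_h^T F_j = sum over i = m-j+1..m of (q^j N_{h,i} - N_{h,i+j}), every summand vanishes when
  h < m - j + 1, and for s = m - j + 1 only q^(j-1) T_s^T D_s survives.  The matrix T_s^T D_s is
  invariant under collineations, which act 2-transitively on points, so it is constant on and off
  the diagonal; its row sums vanish because a flag has exactly q^(k-1) points of type k, and its
  diagonal entries are positive.  Hence it is a nonzero multiple of E_1.
*)

theory Submission
  imports Defs
begin

section \<open>Subspaces of a finite vector space\<close>

lemma card_field_ge_2: "2 \<le> CARD('a::{finite,field})"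
proof -
  have "card {0::'a, 1} \<le> CARD('a)" by (rule card_mono) auto
  then show ?thesis by simp
qed

lemma card_subspace:
  fixes V :: "('a::{finite,field} ^ 'n) set"
  assumes "vec.subspace V"
  shows "card V = CARD('a) ^ vec.dim V"
proof -
  obtain B where B: "B \<subseteq> V" "vec.independent B" "V \<subseteq> vec.span B" "card B = vec.dim V"
    using vec.basis_exists by blast
  have V: "V = vec.span B"
    using B assms vec.span_minimal by blast
  let ?comb = "\<lambda>u. \<Sum>v\<in>B. u v *s v"
  have "bij_betw ?comb (B \<rightarrow>\<^sub>E UNIV) V"
  proof (rule bij_betw_imageI)
    show "inj_on ?comb (B \<rightarrow>\<^sub>E UNIV)"
    proof (rule inj_onI)
      fix u w assume u: "u \<in> B \<rightarrow>\<^sub>E UNIV" and w: "w \<in> B \<rightarrow>\<^sub>E UNIV" and "?comb u = ?comb w"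
      then have "(\<Sum>v\<in>B. (u v - w v) *s v) = 0"
        by (simp add: vector_sub_rdistrib sum_subtractf)
      then have "vec.dependent B" if "\<exists>v\<in>B. u v \<noteq> w v"
        using that unfolding vec.dependent_finite[OF finite] by (intro exI[of _ "\<lambda>v. u v - w v"]) auto
      then show "u = w" using PiE_ext[OF u w] B(2) by auto
    qed
    have "?comb u \<in> ?comb ` (B \<rightarrow>\<^sub>E UNIV)" for u
    proof
      show "?comb u = ?comb (restrict u B)" by (rule sum.cong) auto
    qed auto
    then show "?comb ` (B \<rightarrow>\<^sub>E UNIV) = V"
      unfolding V vec.span_finite[OF finite] by auto
  qed
  then have "card V = card (B \<rightarrow>\<^sub>E (UNIV :: 'a set))"
    by (simp add: bij_betw_same_card)
  also have "\<dots> = CARD('a) ^ vec.dim V"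
    using B(4) by (simp add: card_PiE)
  finally show ?thesis .
qed

definition covers :: "('a::field ^ 'n) set \<Rightarrow> ('a ^ 'n) set \<Rightarrow> ('a ^ 'n) set set" where
  "covers A B = {W. vec.subspace W \<and> vec.dim W = vec.dim A + 1 \<and> A \<subseteq> W \<and> W \<subseteq> B}"

lemma dim_span_insert:
  fixes A :: "('a::field ^ 'n) set"
  assumes "vec.subspace A" "v \<notin> A"
  shows "vec.dim (vec.span (insert v A)) = vec.dim A + 1"
proof -
  have "v \<notin> vec.span A" using assms by (metis vec.span_eq_iff)
  then show ?thesis by (simp add: vec.dim_insert)
qed

lemma span_insert_in_covers:
  fixes A B :: "('a::field ^ 'n) set"
  assumes "vec.subspace A" "vec.subspace B" "A \<subseteq> B" "v \<in> B" "v \<notin> A"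
  shows "vec.span (insert v A) \<in> covers A B"
proof -
  have "vec.dim (vec.span (insert v A)) = vec.dim A + 1"
    using assms(1,5) by (rule dim_span_insert)
  moreover have "vec.span (insert v A) \<subseteq> B"
    using assms vec.span_minimal by blast
  ultimately show ?thesis
    unfolding covers_def using vec.span_superset by blast
qed

lemma covers_eq_span_insert:
  fixes A B W :: "('a::field ^ 'n) set"
  assumes "vec.subspace A" "W \<in> covers A B" "v \<in> W" "v \<notin> A"
  shows "W = vec.span (insert v A)"
proof -
  have W: "vec.subspace W" "vec.dim W = vec.dim A + 1" "A \<subseteq> W"
    using assms(2) unfolding covers_def by auto
  have "vec.span (insert v A) = W"
  proof (rule vec.subspace_dim_equal)
    show "vec.span (insert v A) \<subseteq> W"
      using W assms(3) vec.span_minimal by blast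
    show "vec.dim W \<le> vec.dim (vec.span (insert v A))"
      using W(2) dim_span_insert[OF assms(1,4)] by simp
  qed (simp_all add: W(1))
  then show ?thesis by simp
qed

lemma card_covers:
  fixes A B :: "('a::{finite,field} ^ 'n) set"
  defines "q \<equiv> real CARD('a)"
  assumes A: "vec.subspace A" and B: "vec.subspace B" and "A \<subseteq> B"
  shows "real (card (covers A B)) * (q ^ (vec.dim A + 1) - q ^ vec.dim A) = q ^ vec.dim B - q ^ vec.dim A"
proof -
  have card_diff: "real (card (V - A)) = q ^ vec.dim V - q ^ vec.dim A"
    if "vec.subspace V" "A \<subseteq> V" for V
  proof -
    have "card A \<le> card V" using that(2) by (rule card_mono[rotated]) simp
    then have "real (card (V - A)) = real (card V) - real (card A)"
      using that(2) by (simp add: card_Diff_subset of_nat_diff)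
    then show ?thesis using that(1) A by (simp add: card_subspace q_def)
  qed
  have "B - A = (\<Union>W\<in>covers A B. W - A)"
  proof
    show "B - A \<subseteq> (\<Union>W\<in>covers A B. W - A)"
    proof
      fix v assume "v \<in> B - A"
      then have "vec.span (insert v A) \<in> covers A B" "v \<in> vec.span (insert v A)"
        using span_insert_in_covers[OF A B \<open>A \<subseteq> B\<close>] by (auto intro: vec.span_base)
      with \<open>v \<in> B - A\<close> show "v \<in> (\<Union>W\<in>covers A B. W - A)" by blast
    qed
    show "(\<Union>W\<in>covers A B. W - A) \<subseteq> B - A"
      unfolding covers_def by blast
  qed
  moreover have "(W1 - A) \<inter> (W2 - A) = {}"
    if "W1 \<in> covers A B" "W2 \<in> covers A B" "W1 \<noteq> W2" for W1 W2
    using that covers_eq_span_insert[OF A, of W1 B] covers_eq_span_insert[OF A, of W2 B] by blast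
  ultimately have "card (B - A) = (\<Sum>W\<in>covers A B. card (W - A))"
    by (simp only:) (rule card_UN_disjoint, simp_all)
  then have "real (card (B - A)) = (\<Sum>W\<in>covers A B. q ^ (vec.dim A + 1) - q ^ vec.dim A)"
    by (simp add: covers_def card_diff)
  then show ?thesis
    using card_diff[OF B \<open>A \<subseteq> B\<close>] by simp
qed

lemma point_eq_span:
  fixes X :: "('a::field ^ 'n) set"
  assumes "X \<in> pg_points"
  obtains x where "x \<noteq> 0" "X = vec.span {x}"
proof -
  obtain B where B: "B \<subseteq> X" "vec.independent B" "X \<subseteq> vec.span B" "card B = vec.dim X"
    using vec.basis_exists by blast
  have "card B = 1"
    using B(4) assms by (simp add: pg_points_def)
  then obtain x where x: "B = {x}"
    by (rule card_1_singletonE)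
  have "X = vec.span B"
    using B(1,3) assms vec.span_minimal[of B X] unfolding pg_points_def by (intro equalityI) simp_all
  moreover have "x \<noteq> 0"
    using B(2) x vec.dependent_zero[of B] by blast
  ultimately show ?thesis
    using that x by blast
qed

lemma span_singleton_in_pg_points:
  fixes x :: "'a::field ^ 'n"
  assumes "x \<noteq> 0"
  shows "vec.span {x} \<in> pg_points"
  using assms by (simp add: pg_points_def vec.dim_singleton)

lemma span_singleton_subset_iff:
  fixes x :: "'a::field ^ 'n"
  assumes "vec.subspace V"
  shows "vec.span {x} \<subseteq> V \<longleftrightarrow> x \<in> V"
  using assms vec.span_minimal vec.span_base by blast

lemma pg_points_subset_eq_covers:
  "{X \<in> pg_points. X \<subseteq> V} = covers ({0} :: ('a::field ^ 'n) set) V"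
  by (auto simp: pg_points_def covers_def vec.dim_singleton vec.subspace_0)

lemma card_pg_points_subset:
  fixes V :: "('a::{finite,field} ^ 'n) set"
  assumes "vec.subspace V"
  shows "real (card {X \<in> pg_points. X \<subseteq> V}) * (real CARD('a) - 1) = real CARD('a) ^ vec.dim V - 1"
  using card_covers[of "{0}" V] assms vec.subspace_0[OF assms]
  by (simp add: pg_points_subset_eq_covers vec.dim_singleton)

lemma card_covers_containing_point:
  fixes A B :: "('a::{finite,field} ^ 'n) set"
  assumes A: "vec.subspace A" and B: "vec.subspace B" and "A \<subseteq> B"
    and Y: "Y \<in> pg_points" "Y \<subseteq> B" "\<not> Y \<subseteq> A"
  shows "card {W \<in> covers A B. Y \<subseteq> W} = 1"
proof -
  obtain y where y: "y \<noteq> 0" "Y = vec.span {y}"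
    using point_eq_span[OF Y(1)] .
  have "y \<in> B" "y \<notin> A"
    using Y(2,3) y span_singleton_subset_iff[OF A] span_singleton_subset_iff[OF B] by auto
  have "{W \<in> covers A B. Y \<subseteq> W} = {vec.span (insert y A)}"
  proof (intro equalityI subsetI)
    fix W assume "W \<in> {W \<in> covers A B. Y \<subseteq> W}"
    then have "W \<in> covers A B" "y \<in> W"
      using y(2) vec.span_base[of y "{y}"] by auto
    then show "W \<in> {vec.span (insert y A)}"
      using covers_eq_span_insert[OF A] \<open>y \<notin> A\<close> by blast
  next
    fix W assume "W \<in> {vec.span (insert y A)}"
    then show "W \<in> {W \<in> covers A B. Y \<subseteq> W}"
      using span_insert_in_covers[OF A B \<open>A \<subseteq> B\<close> \<open>y \<in> B\<close> \<open>y \<notin> A\<close>]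
        span_singleton_subset_iff[OF vec.subspace_span] vec.span_base[of y "insert y A"] y(2)
      by auto
  qed
  then show ?thesis
    by simp
qed

section \<open>Maximal flags and types\<close>

definition flag_space :: "('a::field ^ 'n) set list \<Rightarrow> nat \<Rightarrow> ('a ^ 'n) set" where
  "flag_space c k = (if k = 0 then {0} else if k \<le> length c then c ! (k - 1) else UNIV)"

definition chain_flag :: "(nat \<Rightarrow> ('a::field ^ 'n) set) \<Rightarrow> ('a ^ 'n) set list" where
  "chain_flag V = map (\<lambda>k. V (Suc k)) [0..<CARD('n) - 1]"

lemma flag_space_chain_flag:
  fixes V :: "nat \<Rightarrow> ('a::field ^ 'n) set"
  shows "flag_space (chain_flag V) k = (if k = 0 then {0} else if k < CARD('n) then V k else UNIV)"
  by (auto simp: flag_space_def chain_flag_def)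

lemma chain_flag_in_max_flags:
  fixes V :: "nat \<Rightarrow> ('a::field ^ 'n) set"
  assumes V: "\<And>k. 0 < k \<Longrightarrow> k < CARD('n) \<Longrightarrow> vec.subspace (V k) \<and> vec.dim (V k) = k"
    and mono: "\<And>k. 0 < k \<Longrightarrow> Suc k < CARD('n) \<Longrightarrow> V k \<subseteq> V (Suc k)"
  shows "chain_flag V \<in> max_flags"
proof -
  let ?c = "chain_flag V"
  have len: "length ?c = CARD('n) - 1"
    by (simp add: chain_flag_def)
  have nth: "?c ! i = V (Suc i)" if "i < length ?c" for i
    using that by (simp add: chain_flag_def)
  have "vec.subspace (?c ! i) \<and> vec.dim (?c ! i) = i + 1" if "i < length ?c" for i
    using V[of "Suc i"] that len nth by simp
  moreover have "?c ! i \<subset> ?c ! (i + 1)" if "i + 1 < length ?c" for i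
  proof -
    have "V (Suc i) \<subseteq> V (Suc (Suc i))" "vec.dim (V (Suc i)) \<noteq> vec.dim (V (Suc (Suc i)))"
      using mono[of "Suc i"] V[of "Suc i"] V[of "Suc (Suc i)"] that len by simp_all
    then show ?thesis
      using that nth[of i] nth[of "i + 1"] by auto
  qed
  ultimately show ?thesis
    using len unfolding max_flags_def by blast
qed

lemma length_max_flag: "c \<in> max_flags \<Longrightarrow> length (c :: ('a::field ^ 'n) set list) = CARD('n) - 1"
  by (simp add: max_flags_def)

lemma max_flag_nth:
  fixes c :: "('a::field ^ 'n) set list"
  assumes "c \<in> max_flags"
  shows "i < length c \<Longrightarrow> vec.subspace (c ! i) \<and> vec.dim (c ! i) = Suc i"
    and "Suc i < length c \<Longrightarrow> c ! i \<subset> c ! Suc i"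
  using assms by (simp_all add: max_flags_def)

lemma subspace_flag_space:
  fixes c :: "('a::field ^ 'n) set list"
  assumes "c \<in> max_flags"
  shows "vec.subspace (flag_space c k)"
  using max_flag_nth(1)[OF assms, of "k - 1"]
  by (auto simp: flag_space_def vec.subspace_0 vec.subspace_UNIV)

lemma dim_flag_space:
  fixes c :: "('a::field ^ 'n) set list"
  assumes c: "c \<in> max_flags" and "k \<le> CARD('n)"
  shows "vec.dim (flag_space c k) = k"
proof -
  consider "k = 0" | "0 < k" "k \<le> length c" | "k = CARD('n)" "length c < k"
    using assms(2) length_max_flag[OF c] by linarith
  then show ?thesis
  proof cases
    case 2
    then show ?thesis
      using max_flag_nth(1)[OF c, of "k - 1"] by (simp add: flag_space_def)
  qed (simp_all add: flag_space_def vec.dim_UNIV card_cart_basis)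
qed

lemma flag_space_mono:
  fixes c :: "('a::field ^ 'n) set list"
  assumes c: "c \<in> max_flags" and "k \<le> k'"
  shows "flag_space c k \<subseteq> flag_space c k'"
proof (rule lift_Suc_mono_le[OF _ \<open>k \<le> k'\<close>])
  fix k
  have "0 \<in> flag_space c (Suc k)"
    using subspace_flag_space[OF c] vec.subspace_0 by blast
  moreover have "c ! (k - 1) \<subseteq> c ! k" if "0 < k" "k < length c"
    using max_flag_nth(2)[OF c, of "k - 1"] that by simp
  ultimately show "flag_space c k \<subseteq> flag_space c (Suc k)"
    by (auto simp: flag_space_def)
qed

lemma chain_flag_flag_space:
  fixes c :: "('a::field ^ 'n) set list"
  assumes "c \<in> max_flags"
  shows "chain_flag (flag_space c) = c"
  using length_max_flag[OF assms] by (intro nth_equalityI) (auto simp: chain_flag_def flag_space_def)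

lemma flag_type_least:
  fixes c :: "('a::field ^ 'n) set list"
  assumes "\<not> X \<subseteq> {0}"
  shows "X \<subseteq> flag_space c (flag_type c X) \<and> (\<forall>k. X \<subseteq> flag_space c k \<longrightarrow> flag_type c X \<le> k)"
proof -
  have nonzero: "k \<noteq> 0" if "X \<subseteq> flag_space c k" for k
    using that assms by (cases k) (simp_all add: flag_space_def)
  show ?thesis
  proof (cases "\<exists>k\<in>{1..length c}. X \<subseteq> c ! (k - 1)")
    case True
    let ?Q = "\<lambda>k. k \<in> {1..length c} \<and> X \<subseteq> c ! (k - 1)"
    have t: "flag_type c X = (LEAST k. ?Q k)"
      using True unfolding flag_type_def by (rule if_P)
    have Q_t: "?Q (flag_type c X)"
      unfolding t using True by (rule LeastI_ex[OF bexE]) blast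
    have "flag_type c X \<le> k" if "X \<subseteq> flag_space c k" for k
    proof (cases "k \<le> length c")
      case True
      then have "?Q k"
        using that nonzero[OF that] by (simp add: flag_space_def)
      then show ?thesis
        unfolding t by (rule Least_le)
    next
      case False
      then show ?thesis
        using Q_t by simp
    qed
    moreover have "flag_space c (flag_type c X) = c ! (flag_type c X - 1)"
      using Q_t by (simp add: flag_space_def)
    ultimately show ?thesis
      using Q_t by simp
  next
    case False
    then have t: "flag_type c X = length c + 1"
      unfolding flag_type_def by (rule if_not_P)
    have "flag_type c X \<le> k" if "X \<subseteq> flag_space c k" for k
    proof (rule ccontr)
      assume "\<not> flag_type c X \<le> k"
      then have "k \<in> {1..length c}" "X \<subseteq> c ! (k - 1)"
        using t that nonzero[OF that] by (simp_all add: flag_space_def)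
      with False show False
        by blast
    qed
    moreover have "X \<subseteq> flag_space c (flag_type c X)"
      using t by (simp add: flag_space_def)
    ultimately show ?thesis
      by blast
  qed
qed

lemma flag_type_le_iff:
  fixes c :: "('a::field ^ 'n) set list"
  assumes c: "c \<in> max_flags" and X: "X \<in> pg_points"
  shows "flag_type c X \<le> k \<longleftrightarrow> X \<subseteq> flag_space c k"
proof -
  have "\<not> X \<subseteq> {0}"
    using X vec.dim_subset[of X "{0}"] by (auto simp: pg_points_def vec.dim_singleton)
  then show ?thesis
    using flag_type_least flag_space_mono[OF c] by (meson subset_trans)
qed

lemma flag_type_eq_iff:
  fixes c :: "('a::field ^ 'n) set list"
  assumes "c \<in> max_flags" "X \<in> pg_points" "0 < h"
  shows "flag_type c X = h \<longleftrightarrow> X \<subseteq> flag_space c h \<and> \<not> X \<subseteq> flag_space c (h - 1)"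
proof -
  have "flag_type c X = h \<longleftrightarrow> flag_type c X \<le> h \<and> \<not> flag_type c X \<le> h - 1"
    using assms(3) by arith
  then show ?thesis
    by (simp only: flag_type_le_iff[OF assms(1,2)])
qed

lemma exists_max_flag: "\<exists>c. c \<in> (max_flags :: ('a::field ^ 'n) set list set)"
proof -
  obtain bs :: "('a ^ 'n) list" where bs: "set bs = cart_basis" "distinct bs"
    using finite_distinct_list[OF finite_cart_basis] by blast
  define V where "V k = vec.span (set (take k bs))" for k
  have "chain_flag V \<in> max_flags"
  proof (rule chain_flag_in_max_flags)
    fix k assume "k < CARD('n)"
    have "vec.independent (set (take k bs))"
      using vec.independent_mono[OF independent_cart_basis] set_take_subset bs(1) by metis
    moreover have "length bs = CARD('n)"
      using distinct_card[OF bs(2)] bs(1) card_cart_basis by metis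
    ultimately show "vec.subspace (V k) \<and> vec.dim (V k) = k"
      using \<open>k < CARD('n)\<close> bs(2) by (simp add: V_def vec.dim_eq_card_independent distinct_card)
  next
    fix k
    show "V k \<subseteq> V (Suc k)"
      unfolding V_def by (rule vec.span_mono, rule set_take_subset_set_take) simp
  qed
  then show ?thesis ..
qed

lemma exists_point_of_flag_type:
  fixes c :: "('a::field ^ 'n) set list"
  assumes c: "c \<in> max_flags" and s: "0 < s" "s \<le> CARD('n)"
  shows "\<exists>X\<in>pg_points. flag_type c X = s"
proof -
  have "vec.dim (flag_space c (s - 1)) \<noteq> vec.dim (flag_space c s)"
    using dim_flag_space[OF c] s by simp
  then have "flag_space c (s - 1) \<noteq> flag_space c s"
    by metis
  then obtain v where v: "v \<in> flag_space c s" "v \<notin> flag_space c (s - 1)"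
    using flag_space_mono[OF c, of "s - 1" s] by auto
  have "v \<noteq> 0"
    using v(2) vec.subspace_0[OF subspace_flag_space[OF c]] by blast
  then have point: "vec.span {v} \<in> pg_points"
    by (rule span_singleton_in_pg_points)
  moreover have "flag_type c (vec.span {v}) = s"
    using v flag_type_eq_iff[OF c point s(1)]
      span_singleton_subset_iff[OF subspace_flag_space[OF c]] by simp
  ultimately show ?thesis ..
qed

section \<open>Panels\<close>

lemma finite_max_flags: "finite (max_flags :: ('a::{finite,field} ^ 'n) set list set)"
proof (rule finite_subset)
  show "max_flags \<subseteq> {c :: ('a ^ 'n) set list. set c \<subseteq> UNIV \<and> length c = CARD('n) - 1}"
    by (auto simp: max_flags_def)
qed (rule finite_lists_length_eq, simp)

lemma flag_space_top:
  fixes c :: "('a::field ^ 'n) set list"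
  assumes "c \<in> max_flags" "CARD('n) \<le> k"
  shows "flag_space c k = UNIV"
proof -
  have "0 < CARD('n)" by simp
  then have "length c < k"
    using assms length_max_flag[OF assms(1)] by linarith
  then show ?thesis
    by (simp add: flag_space_def)
qed

definition panel :: "nat \<Rightarrow> ('a::field ^ 'n) set list \<Rightarrow> ('a ^ 'n) set list set" where
  "panel i c = {c' \<in> max_flags. \<forall>k. k \<noteq> i \<longrightarrow> flag_space c' k = flag_space c k}"

lemma panel_sym:
  "c \<in> max_flags \<Longrightarrow> c' \<in> panel i c \<longleftrightarrow> c' \<in> max_flags \<and> c \<in> panel i c'"
  by (auto simp: panel_def)

lemma max_flags_eqI:
  fixes c1 c2 :: "('a::field ^ 'n) set list"
  assumes "c1 \<in> max_flags" "c2 \<in> max_flags" "\<And>k. flag_space c1 k = flag_space c2 k"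
  shows "c1 = c2"
proof -
  have "c1 = chain_flag (flag_space c1)"
    using chain_flag_flag_space[OF assms(1)] by simp
  also have "flag_space c1 = flag_space c2"
    using assms(3) by (rule ext)
  also have "chain_flag (flag_space c2) = c2"
    using assms(2) by (rule chain_flag_flag_space)
  finally show ?thesis .
qed

lemma flag_space_in_covers:
  fixes c :: "('a::field ^ 'n) set list"
  assumes c: "c \<in> max_flags" and i: "0 < i" "i < CARD('n)"
  shows "flag_space c i \<in> covers (flag_space c (i - 1)) (flag_space c (Suc i))"
proof -
  have "vec.dim (flag_space c i) = vec.dim (flag_space c (i - 1)) + 1"
    using dim_flag_space[OF c] i by simp
  then show ?thesis
    using subspace_flag_space[OF c] flag_space_mono[OF c, of "i - 1" i] flag_space_mono[OF c, of i "Suc i"]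
    by (simp add: covers_def)
qed

lemma update_flag_space_in_panel:
  fixes c :: "('a::field ^ 'n) set list"
  assumes c: "c \<in> max_flags" and i: "0 < i" "i < CARD('n)"
    and W: "W \<in> covers (flag_space c (i - 1)) (flag_space c (Suc i))"
  defines "c' \<equiv> chain_flag ((flag_space c)(i := W))"
  shows "c' \<in> panel i c" "flag_space c' i = W"
proof -
  let ?V = "(flag_space c)(i := W)"
  have W_props: "vec.subspace W" "vec.dim W = i" "flag_space c (i - 1) \<subseteq> W" "W \<subseteq> flag_space c (Suc i)"
    using W i dim_flag_space[OF c, of "i - 1"] by (auto simp: covers_def)
  have "c' \<in> max_flags"
    unfolding c'_def
  proof (rule chain_flag_in_max_flags)
    fix k assume "0 < k" "k < CARD('n)"
    then show "vec.subspace (?V k) \<and> vec.dim (?V k) = k"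
      using W_props subspace_flag_space[OF c] dim_flag_space[OF c, of k] by simp
  next
    fix k
    consider "k = i" | "Suc k = i" | "k \<noteq> i" "Suc k \<noteq> i"
      by blast
    then show "?V k \<subseteq> ?V (Suc k)"
    proof cases
      case 2
      then have "k = i - 1" by simp
      then show ?thesis using W_props(3) \<open>Suc k = i\<close> by simp
    qed (use W_props(4) flag_space_mono[OF c, of k "Suc k"] in simp_all)
  qed
  moreover have "flag_space c' k = flag_space c k" if "k \<noteq> i" for k
  proof -
    have "flag_space c 0 = {0}"
      by (simp add: flag_space_def)
    then show ?thesis
      using that flag_space_top[OF c, of k] by (simp add: c'_def flag_space_chain_flag)
  qed
  ultimately show "c' \<in> panel i c"
    by (simp add: panel_def)
  show "flag_space c' i = W"
    using i by (simp add: c'_def flag_space_chain_flag)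
qed

lemma bij_betw_panel_covers:
  fixes c :: "('a::field ^ 'n) set list"
  assumes c: "c \<in> max_flags" and i: "0 < i" "i < CARD('n)"
  shows "bij_betw (\<lambda>c'. flag_space c' i) (panel i c)
           (covers (flag_space c (i - 1)) (flag_space c (Suc i)))"
proof (rule bij_betw_imageI)
  show "inj_on (\<lambda>c'. flag_space c' i) (panel i c)"
  proof (rule inj_onI)
    fix c1 c2 assume c12: "c1 \<in> panel i c" "c2 \<in> panel i c" "flag_space c1 i = flag_space c2 i"
    show "c1 = c2"
    proof (rule max_flags_eqI)
      show "c1 \<in> max_flags" "c2 \<in> max_flags"
        using c12 by (auto simp: panel_def)
      show "flag_space c1 k = flag_space c2 k" for k
        using c12 by (cases "k = i") (auto simp: panel_def)
    qed
  qed
  show "(\<lambda>c'. flag_space c' i) ` panel i c = covers (flag_space c (i - 1)) (flag_space c (Suc i))"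
  proof (intro equalityI subsetI)
    fix W assume "W \<in> (\<lambda>c'. flag_space c' i) ` panel i c"
    then obtain c' where "c' \<in> max_flags" "W = flag_space c' i"
      and "\<And>k. k \<noteq> i \<Longrightarrow> flag_space c' k = flag_space c k"
      by (auto simp: panel_def)
    then show "W \<in> covers (flag_space c (i - 1)) (flag_space c (Suc i))"
      using flag_space_in_covers[OF _ i, of c'] i by simp
  next
    fix W assume "W \<in> covers (flag_space c (i - 1)) (flag_space c (Suc i))"
    then have "chain_flag ((flag_space c)(i := W)) \<in> panel i c"
      "W = flag_space (chain_flag ((flag_space c)(i := W))) i"
      using update_flag_space_in_panel[OF c i] by simp_all
    then show "W \<in> (\<lambda>c'. flag_space c' i) ` panel i c"
      by (rule rev_image_eqI)
  qed
qed

lemma card_panel: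
  fixes c :: "('a::{finite,field} ^ 'n) set list"
  assumes c: "c \<in> max_flags" and i: "0 < i" "i < CARD('n)"
  shows "card (panel i c) = CARD('a) + 1"
proof -
  let ?q = "real CARD('a)"
  have "vec.dim (flag_space c (i - 1)) = i - 1" "vec.dim (flag_space c (Suc i)) = Suc i"
    using dim_flag_space[OF c] i by simp_all
  then have "real (card (panel i c)) * (?q ^ (i - 1 + 1) - ?q ^ (i - 1)) = ?q ^ Suc i - ?q ^ (i - 1)"
    using card_covers[OF subspace_flag_space[OF c] subspace_flag_space[OF c]
        flag_space_mono[OF c, of "i - 1" "Suc i"]]
      bij_betw_same_card[OF bij_betw_panel_covers[OF c i]] by simp
  moreover have "?q ^ Suc i - ?q ^ (i - 1) = (?q + 1) * (?q ^ (i - 1 + 1) - ?q ^ (i - 1))"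
    using i by (cases i) (simp_all add: algebra_simps)
  moreover have "?q ^ (i - 1 + 1) - ?q ^ (i - 1) \<noteq> 0"
    using card_field_ge_2[where 'a='a] by simp
  ultimately have "real (card (panel i c)) = ?q + 1"
    by simp
  then show ?thesis
    by (metis of_nat_1 of_nat_add of_nat_eq_iff)
qed

lemma sum_max_flags_panel:
  fixes f :: "('a::{finite,field} ^ 'n) set list \<Rightarrow> real"
  assumes i: "0 < i" "i < CARD('n)"
  shows "(\<Sum>c\<in>max_flags. \<Sum>c'\<in>panel i c. f c') = (real CARD('a) + 1) * (\<Sum>c\<in>max_flags. f c)"
proof -
  have restrict: "panel i c = {c' \<in> max_flags. c' \<in> panel i c}" for c :: "('a ^ 'n) set list"
    by (auto simp: panel_def)
  have "(\<Sum>c\<in>max_flags. \<Sum>c'\<in>panel i c. f c') = (\<Sum>c'\<in>max_flags. \<Sum>c\<in>{c \<in> max_flags. c' \<in> panel i c}. f c')"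
    by (subst restrict) (rule sum.swap_restrict, simp_all add: finite_max_flags)
  also have "\<dots> = (\<Sum>c'\<in>max_flags. real (card (panel i c')) * f c')"
  proof (rule sum.cong[OF refl])
    fix c' :: "('a ^ 'n) set list"
    assume "c' \<in> max_flags"
    then have "{c \<in> max_flags. c' \<in> panel i c} = panel i c'"
      using panel_sym by blast
    then show "(\<Sum>c\<in>{c \<in> max_flags. c' \<in> panel i c}. f c') = real (card (panel i c')) * f c'"
      by simp
  qed
  also have "\<dots> = (real CARD('a) + 1) * (\<Sum>c\<in>max_flags. f c)"
    by (simp add: card_panel[OF _ i] sum_distrib_left add.commute)
  finally show ?thesis .
qed

definition Dmat :: "nat \<Rightarrow> ('a::{finite,field} ^ 'n) set list \<Rightarrow> ('a ^ 'n) set \<Rightarrow> real" where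
  "Dmat i c Y = real CARD('a) * Tmat i c Y - Tmat (Suc i) c Y"

lemma sum_panel_Dmat:
  fixes c :: "('a::{finite,field} ^ 'n) set list"
  assumes c: "c \<in> max_flags" and Y: "Y \<in> pg_points" and i: "0 < i" "i < CARD('n)"
  shows "(\<Sum>c'\<in>panel i c. Dmat i c' Y) = 0"
proof -
  let ?q = "real CARD('a)"
  define A where "A = flag_space c (i - 1)"
  define B where "B = flag_space c (Suc i)"
  define f where "f W = ?q * (if Y \<subseteq> W \<and> \<not> Y \<subseteq> A then 1 else 0) - (if Y \<subseteq> B \<and> \<not> Y \<subseteq> W then 1 else 0)"
    for W
  have A: "vec.subspace A" and B: "vec.subspace B" and "A \<subseteq> B"
    using subspace_flag_space[OF c] flag_space_mono[OF c] by (auto simp: A_def B_def)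
  have "Dmat i c' Y = f (flag_space c' i)" if "c' \<in> panel i c" for c'
  proof -
    have c': "c' \<in> max_flags" "flag_space c' (i - 1) = A" "flag_space c' (Suc i) = B"
      using that i by (auto simp: panel_def A_def B_def)
    show ?thesis
      using flag_type_eq_iff[OF c'(1) Y, of i] flag_type_eq_iff[OF c'(1) Y, of "Suc i"] c' i
      by (simp add: Dmat_def Tmat_def f_def)
  qed
  then have "(\<Sum>c'\<in>panel i c. Dmat i c' Y) = (\<Sum>W\<in>covers A B. f W)"
    using sum.reindex_bij_betw[OF bij_betw_panel_covers[OF c i], of f] by (simp add: A_def B_def)
  also have "\<dots> = 0"
  proof (cases "Y \<subseteq> A \<or> \<not> Y \<subseteq> B")
    case True
    then show ?thesis
      by (intro sum.neutral) (auto simp: f_def covers_def)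
  next
    case False
    then have "card {W \<in> covers A B. Y \<subseteq> W} = 1"
      using card_covers_containing_point[OF A B \<open>A \<subseteq> B\<close> Y] by simp
    moreover have "card (covers A B) = CARD('a) + 1"
      using bij_betw_same_card[OF bij_betw_panel_covers[OF c i]] card_panel[OF c i]
      by (simp add: A_def B_def)
    moreover have "f W = (?q + 1) * (if Y \<subseteq> W then 1 else 0) - 1" if "W \<in> covers A B" for W
      using False by (simp add: f_def)
    then have "(\<Sum>W\<in>covers A B. f W) = (?q + 1) * real (card {W \<in> covers A B. Y \<subseteq> W}) - real (card (covers A B))"
      by (simp add: sum_subtractf sum_distrib_left[symmetric] sum.inter_filter[symmetric])
    ultimately show ?thesis
      by simp
  qed
  finally show ?thesis .
qed

lemma Tmat_panel:
  fixes c :: "('a::field ^ 'n) set list"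
  assumes c: "c \<in> max_flags" and c': "c' \<in> panel i c" and X: "X \<in> pg_points"
    and h: "0 < h" "h \<noteq> i" "h \<noteq> Suc i"
  shows "Tmat h c' X = Tmat h c X"
proof -
  have "c' \<in> max_flags" "flag_space c' h = flag_space c h" "flag_space c' (h - 1) = flag_space c (h - 1)"
    using c' h by (auto simp: panel_def)
  then show ?thesis
    using flag_type_eq_iff[OF c X h(1)] flag_type_eq_iff[OF _ X h(1), of c'] by (simp add: Tmat_def)
qed

lemma transp_mult_Tmat_Dmat_eq_0:
  fixes X Y :: "('a::{finite,field} ^ 'n) set"
  assumes X: "X \<in> pg_points" and Y: "Y \<in> pg_points"
    and h: "0 < h" "h \<noteq> i" "h \<noteq> Suc i" and i: "0 < i" "i < CARD('n)"
  shows "transp_mult (Tmat h) (Dmat i) X Y = 0"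
proof -
  have "(real CARD('a) + 1) * transp_mult (Tmat h) (Dmat i) X Y
      = (\<Sum>c\<in>max_flags. \<Sum>c'\<in>panel i c. Tmat h c' X * Dmat i c' Y)"
    unfolding transp_mult_def by (rule sum_max_flags_panel[OF i, symmetric])
  also have "\<dots> = (\<Sum>c\<in>max_flags. Tmat h c X * (\<Sum>c'\<in>panel i c. Dmat i c' Y))"
    using Tmat_panel[OF _ _ X h] by (simp add: sum_distrib_left)
  also have "\<dots> = 0"
    using sum_panel_Dmat[OF _ Y i] by simp
  finally show ?thesis
    by (simp add: add_nonneg_eq_0_iff)
qed

section \<open>Reduction of the products with the matrices F_j\<close>

lemma transp_mult_Dmat:
  "transp_mult A (Dmat i) X Y
     = real CARD('a) * transp_mult A (Tmat i) X Y - transp_mult A (Tmat (Suc i)) X Y"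
  for A :: "('a::{finite,field} ^ 'n) set list \<Rightarrow> ('a ^ 'n) set \<Rightarrow> real"
  by (simp add: transp_mult_def Dmat_def algebra_simps sum_subtractf sum_distrib_left)

lemma geometric_from_ratio:
  fixes f :: "nat \<Rightarrow> 'a::comm_semiring_1"
  assumes step: "\<And>l. a \<le> l \<Longrightarrow> l < b \<Longrightarrow> f (Suc l) = r * f l" and "a \<le> i" "i + j \<le> b"
  shows "f (i + j) = r ^ j * f i"
  using \<open>i + j \<le> b\<close>
proof (induction j)
  case (Suc j)
  then have "f (i + Suc j) = r * f (i + j)"
    using step[of "i + j"] \<open>a \<le> i\<close> by simp
  with Suc show ?case
    by (simp add: mult.assoc)
qed simp

lemma transp_mult_Tmat_shift:
  fixes X Y :: "('a::{finite,field} ^ 'n) set"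
  assumes X: "X \<in> pg_points" and Y: "Y \<in> pg_points" and "0 < h" "h < i" "i + j \<le> CARD('n)"
  shows "transp_mult (Tmat h) (Tmat (i + j)) X Y = real CARD('a) ^ j * transp_mult (Tmat h) (Tmat i) X Y"
proof (rule geometric_from_ratio[where f = "\<lambda>k. transp_mult (Tmat h) (Tmat k) X Y"])
  fix l assume "Suc h \<le> l" "l < CARD('n)"
  then show "transp_mult (Tmat h) (Tmat (Suc l)) X Y = real CARD('a) * transp_mult (Tmat h) (Tmat l) X Y"
    using transp_mult_Tmat_Dmat_eq_0[OF X Y \<open>0 < h\<close>, of l] transp_mult_Dmat[of "Tmat h" l X Y]
    by simp
qed (use assms in auto)

lemma transp_mult_Fmat:
  fixes A :: "('a::{finite,field} ^ 'n) set list \<Rightarrow> ('a ^ 'n) set \<Rightarrow> real"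
  assumes "j \<le> m"
  shows "transp_mult A (Fmat m j) X Y = (\<Sum>i = m - j + 1..m.
     real CARD('a) ^ j * transp_mult A (Tmat i) X Y - transp_mult A (Tmat (i + j)) X Y)"
proof -
  let ?t = "\<lambda>i. transp_mult A (Tmat i) X Y"
  have "transp_mult A (Fmat m j) X Y
      = real CARD('a) ^ j * (\<Sum>i = m - j + 1..m. ?t i) - (\<Sum>i = m + 1..m + j. ?t i)"
    by (simp add: transp_mult_def Fmat_def algebra_simps sum_subtractf sum_distrib_left
        sum.swap[of _ max_flags])
  also have "(\<Sum>i = m + 1..m + j. ?t i) = (\<Sum>i = m - j + 1..m. ?t (i + j))"
    using sum.shift_bounds_cl_nat_ivl[of ?t "m - j + 1" j m] assms by simp
  finally show ?thesis
    by (simp add: sum_subtractf sum_distrib_left)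
qed

lemma transp_mult_Tmat_Fmat_below:
  fixes X Y :: "('a::{finite,field} ^ 'n) set"
  assumes X: "X \<in> pg_points" and Y: "Y \<in> pg_points"
    and "CARD('n) = 2 * m" "j \<le> m" "0 < h" "h < m - j + 1"
  shows "transp_mult (Tmat h) (Fmat m j) X Y = 0"
  unfolding transp_mult_Fmat[OF \<open>j \<le> m\<close>]
  using assms transp_mult_Tmat_shift[OF X Y \<open>0 < h\<close>] by (intro sum.neutral ballI) simp

lemma transp_mult_Tmat_Fmat_at:
  fixes X Y :: "('a::{finite,field} ^ 'n) set"
  assumes X: "X \<in> pg_points" and Y: "Y \<in> pg_points"
    and "CARD('n) = 2 * m" "0 < j" "j \<le> m"
  defines "s \<equiv> m - j + 1"
  shows "transp_mult (Tmat s) (Fmat m j) X Y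
    = real CARD('a) ^ (j - 1) * transp_mult (Tmat s) (Dmat s) X Y"
proof -
  let ?q = "real CARD('a)" and ?t = "\<lambda>i. transp_mult (Tmat s) (Tmat i) X Y"
  have "s \<le> m" "0 < s"
    using assms by (simp_all add: s_def)
  have "?t (s + j) = ?q ^ (j - 1) * ?t (Suc s)"
    using transp_mult_Tmat_shift[OF X Y \<open>0 < s\<close>, of "Suc s" "j - 1"] assms by (simp add: s_def)
  then have head: "?q ^ j * ?t s - ?t (s + j) = ?q ^ (j - 1) * transp_mult (Tmat s) (Dmat s) X Y"
    using \<open>0 < j\<close> by (cases j) (simp_all add: transp_mult_Dmat algebra_simps)
  have tail: "?q ^ j * ?t i - ?t (i + j) = 0" if "i \<in> {Suc s..m}" for i
    using that assms transp_mult_Tmat_shift[OF X Y \<open>0 < s\<close>, of i j] by simp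
  have "(\<Sum>i = Suc s..m. ?q ^ j * ?t i - ?t (i + j)) = 0"
    using tail by (intro sum.neutral) blast
  then show ?thesis
    unfolding transp_mult_Fmat[OF \<open>j \<le> m\<close>] s_def[symmetric] sum.atLeast_Suc_atMost[OF \<open>s \<le> m\<close>]
    using head by simp
qed

section \<open>Collineations\<close>

lemma independent_pair_of_points:
  fixes x y :: "'a::field ^ 'n"
  assumes "x \<noteq> 0" "y \<noteq> 0" "vec.span {x} \<noteq> vec.span {y}"
  shows "vec.independent {x, y}"
proof (rule vec.independent_insertI)
  show "x \<notin> vec.span {y}"
  proof
    assume "x \<in> vec.span {y}"
    then have "vec.span {x} \<subseteq> vec.span {y}"
      using span_singleton_subset_iff[OF vec.subspace_span] by blast
    moreover have "vec.dim (vec.span {y}) \<le> vec.dim (vec.span {x})"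
      using assms by (simp add: vec.dim_singleton)
    ultimately show False
      using vec.subspace_dim_equal[of "vec.span {x}" "vec.span {y}"] assms(3) by simp
  qed
qed (use assms in simp)

lemma exists_collineation:
  fixes X Y X' Y' :: "('a::field ^ 'n) set"
  assumes points: "X \<in> pg_points" "Y \<in> pg_points" "X' \<in> pg_points" "Y' \<in> pg_points"
    and "X = Y \<longleftrightarrow> X' = Y'"
  obtains g where "Vector_Spaces.linear (*s) (*s) g" "inj g" "g ` X = X'" "g ` Y = Y'"
proof -
  obtain x where x: "x \<noteq> 0" "X = vec.span {x}" using point_eq_span[OF points(1)] .
  obtain y where y: "y \<noteq> 0" "Y = vec.span {y}" using point_eq_span[OF points(2)] .
  obtain x' where x': "x' \<noteq> 0" "X' = vec.span {x'}" using point_eq_span[OF points(3)] .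
  obtain y' where y': "y' \<noteq> 0" "Y' = vec.span {y'}" using point_eq_span[OF points(4)] .
  have image: "g ` vec.span {z} = vec.span {g z}" if "Vector_Spaces.linear (*s) (*s) g" for g z
    using vec.linear_span_image[OF that, of "{z}"] by simp
  show ?thesis
  proof (cases "X = Y")
    case True
    have "vec.independent {x}" "vec.independent ((\<lambda>_. x') ` {x})" "inj_on (\<lambda>_. x') {x}"
      using x(1) x'(1) by simp_all
    from vec.linear_independent_extend_inj[OF this]
    obtain g where g: "Vector_Spaces.linear (*s) (*s) g" "inj g" "g x = x'"
      by blast
    have "g ` X = X'"
      using image[OF g(1), of x] x(2) x'(2) g(3) by simp
    moreover have "g ` Y = Y'"
      using calculation True assms(5) by simp
    ultimately show ?thesis
      using that g(1,2) by blast
  next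
    case False
    define f where "f z = (if z = x then x' else y')" for z
    have "x \<noteq> y" "x' \<noteq> y'"
      using False assms(5) x y x' y' by auto
    then have "vec.independent {x, y}" "vec.independent (f ` {x, y})" "inj_on f {x, y}"
      using independent_pair_of_points x y x' y' False assms(5) by (auto simp: f_def)
    from vec.linear_independent_extend_inj[OF this]
    obtain g where g: "Vector_Spaces.linear (*s) (*s) g" "inj g" "g x = x'" "g y = y'"
      using \<open>x \<noteq> y\<close> unfolding f_def by auto
    have "g ` X = X'" "g ` Y = Y'"
      using image[OF g(1), of x] image[OF g(1), of y] x(2) x'(2) y(2) y'(2) g(3,4) by simp_all
    then show ?thesis
      using that g(1,2) by blast
  qed
qed

lemma max_flag_image:
  fixes g :: "'a::field ^ 'n \<Rightarrow> 'a ^ 'n"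
  assumes g: "Vector_Spaces.linear (*s) (*s) g" "inj g" and c: "c \<in> max_flags"
  shows "map ((`) g) c \<in> max_flags"
proof -
  have "map ((`) g) c = chain_flag (\<lambda>k. g ` flag_space c k)"
    using length_max_flag[OF c] by (intro nth_equalityI) (auto simp: chain_flag_def flag_space_def)
  also have "\<dots> \<in> max_flags"
  proof (rule chain_flag_in_max_flags)
    fix k assume "0 < k" "k < CARD('n)"
    then show "vec.subspace (g ` flag_space c k) \<and> vec.dim (g ` flag_space c k) = k"
      using vec.linear_subspace_image[OF g(1) subspace_flag_space[OF c]]
        vec.dim_image_eq[OF g(1) inj_on_subset[OF g(2)]] dim_flag_space[OF c] by simp
  next
    fix k
    show "g ` flag_space c k \<subseteq> g ` flag_space c (Suc k)"
      using flag_space_mono[OF c] by (intro image_mono) simp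
  qed
  finally show ?thesis .
qed

lemma flag_type_image:
  fixes g :: "'a::field ^ 'n \<Rightarrow> 'a ^ 'n"
  assumes "inj g"
  shows "flag_type (map ((`) g) c) (g ` X) = flag_type c X"
proof -
  have "(\<lambda>k. k \<in> {1..length c} \<and> g ` X \<subseteq> map ((`) g) c ! (k - 1))
      = (\<lambda>k. k \<in> {1..length c} \<and> X \<subseteq> c ! (k - 1))"
  proof
    fix k
    show "(k \<in> {1..length c} \<and> g ` X \<subseteq> map ((`) g) c ! (k - 1))
        = (k \<in> {1..length c} \<and> X \<subseteq> c ! (k - 1))"
    proof (cases "k \<in> {1..length c}")
      case True
      then have "map ((`) g) c ! (k - 1) = g ` (c ! (k - 1))"
        by auto
      then show ?thesis
        using True by (simp add: inj_image_subset_iff[OF assms])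
    qed auto
  qed
  then show ?thesis
    by (simp only: flag_type_def length_map Bex_def)
qed

lemma bij_betw_max_flags_image:
  fixes g :: "'a::{finite,field} ^ 'n \<Rightarrow> 'a ^ 'n"
  assumes g: "Vector_Spaces.linear (*s) (*s) g" "inj g"
  shows "bij_betw (map ((`) g)) max_flags max_flags"
proof -
  have inj: "inj_on (map ((`) g)) max_flags"
    using g(2) by (intro inj_on_subset[OF inj_mapI]) (auto simp: inj_def inj_image_eq_iff)
  moreover have "map ((`) g) ` max_flags = max_flags"
    using max_flag_image[OF g] card_image[OF inj]
    by (intro card_subset_eq[OF finite_max_flags]) auto
  ultimately show ?thesis
    by (simp add: bij_betw_def)
qed

lemma sum_max_flags_collineation:
  fixes g :: "'a::{finite,field} ^ 'n \<Rightarrow> 'a ^ 'n" and F :: "nat \<Rightarrow> nat \<Rightarrow> real"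
  assumes g: "Vector_Spaces.linear (*s) (*s) g" "inj g"
  shows "(\<Sum>c\<in>max_flags. F (flag_type c (g ` X)) (flag_type c (g ` Y)))
       = (\<Sum>c\<in>max_flags. F (flag_type c X) (flag_type c Y))"
  using sum.reindex_bij_betw[OF bij_betw_max_flags_image[OF g],
      of "\<lambda>c. F (flag_type c (g ` X)) (flag_type c (g ` Y))"]
  by (simp add: flag_type_image[OF g(2)])

lemma transp_mult_Tmat_Dmat_invariant:
  fixes X Y X' Y' :: "('a::{finite,field} ^ 'n) set"
  assumes "X \<in> pg_points" "Y \<in> pg_points" "X' \<in> pg_points" "Y' \<in> pg_points"
    and "X = Y \<longleftrightarrow> X' = Y'"
  shows "transp_mult (Tmat s) (Dmat s) X Y = transp_mult (Tmat s) (Dmat s) X' Y'"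
proof -
  obtain g where g: "Vector_Spaces.linear (*s) (*s) g" "inj g" "g ` X = X'" "g ` Y = Y'"
    using exists_collineation[OF assms] .
  define F where "F a b = (if a = s then 1 else 0) *
      (real CARD('a) * (if b = s then 1 else 0) - (if b = Suc s then 1 else 0))" for a b :: nat
  have "transp_mult (Tmat s) (Dmat s) Z W = (\<Sum>c\<in>max_flags. F (flag_type c Z) (flag_type c W))"
    for Z W :: "('a ^ 'n) set"
    by (simp add: transp_mult_def Tmat_def Dmat_def F_def)
  then show ?thesis
    using sum_max_flags_collineation[OF g(1,2), of F X Y] g(3,4) by simp
qed

section \<open>Row sums and E_1\<close>

lemma sum_two_valued:
  fixes M :: "'p \<Rightarrow> real"
  assumes "finite P" "X \<in> P" "\<And>Y. Y \<in> P \<Longrightarrow> M Y = (if Y = X then d else e)"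
  shows "(\<Sum>Y\<in>P. M Y) = d + (real (card P) - 1) * e"
proof -
  have "(\<Sum>Y\<in>P. M Y) = M X + (\<Sum>Y\<in>P - {X}. e)"
    using assms by (simp add: sum.remove[OF assms(1,2)])
  moreover have "0 < card P"
    using assms(1,2) by (auto simp: card_gt_0_iff)
  ultimately show ?thesis
    using assms(2,3) by (simp add: card_Diff_singleton of_nat_diff)
qed

lemma zero_row_sums_eq_centering:
  fixes M :: "'p \<Rightarrow> 'p \<Rightarrow> real"
  assumes "finite P" "X0 \<in> P" "M X0 X0 \<noteq> 0"
    and inv: "\<And>X Y X' Y'. X \<in> P \<Longrightarrow> Y \<in> P \<Longrightarrow> X' \<in> P \<Longrightarrow> Y' \<in> P \<Longrightarrow>
      (X = Y \<longleftrightarrow> X' = Y') \<Longrightarrow> M X Y = M X' Y'"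
    and rows: "\<And>X. X \<in> P \<Longrightarrow> (\<Sum>Y\<in>P. M X Y) = 0"
  shows "\<exists>\<alpha>. \<alpha> \<noteq> 0 \<and> (\<forall>X\<in>P. \<forall>Y\<in>P. M X Y = \<alpha> * ((if X = Y then 1 else 0) - 1 / real (card P)))"
proof -
  have "P \<noteq> {X0}"
    using rows[OF assms(2)] assms(3) by auto
  then obtain Y0 where Y0: "Y0 \<in> P" "Y0 \<noteq> X0"
    using assms(2) by blast
  define d e p where "d = M X0 X0" and "e = M X0 Y0" and "p = real (card P)"
  have two_valued: "M X Y = (if Y = X then d else e)" if "X \<in> P" "Y \<in> P" for X Y
    using that inv[OF that assms(2) assms(2)] inv[OF that assms(2) Y0(1)] Y0(2)
    by (auto simp: d_def e_def)
  have row: "d + (p - 1) * e = 0"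
    using rows[OF assms(2)] sum_two_valued[OF assms(1,2) two_valued[OF assms(2)]] by (simp add: p_def)
  have "p > 0"
    using assms(1,2) by (auto simp: p_def card_gt_0_iff)
  show ?thesis
  proof (intro exI conjI ballI)
    show "d - e \<noteq> 0"
    proof
      assume "d - e = 0"
      then have "p * d = 0"
        using row by (simp add: algebra_simps)
      then show False
        using \<open>p > 0\<close> assms(3) by (simp add: d_def)
    qed
    have "d - e = - e * p"
      using row by (simp add: algebra_simps)
    then have "(d - e) / p = - e"
      using \<open>p > 0\<close> by simp
    then show "M X Y = (d - e) * ((if X = Y then 1 else 0) - 1 / real (card P))"
      if "X \<in> P" "Y \<in> P" for X Y
      using two_valued[OF that] by (simp add: right_diff_distrib p_def)
  qed
qed

lemma sum_pg_points_Tmat: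
  fixes c :: "('a::{finite,field} ^ 'n) set list"
  assumes c: "c \<in> max_flags" and k: "0 < k" "k \<le> CARD('n)"
  shows "(\<Sum>Y\<in>pg_points. Tmat k c Y) = real CARD('a) ^ (k - 1)"
proof -
  let ?q = "real CARD('a)"
  define P where "P l = {Y \<in> pg_points. Y \<subseteq> flag_space c l}" for l
  have card_P: "real (card (P l)) * (?q - 1) = ?q ^ l - 1" if "l \<le> CARD('n)" for l
    using card_pg_points_subset[OF subspace_flag_space[OF c]] dim_flag_space[OF c that]
    by (simp add: P_def)
  have "P (k - 1) \<subseteq> P k"
    using flag_space_mono[OF c, of "k - 1" k] by (auto simp: P_def)
  have "{Y \<in> pg_points. flag_type c Y = k} = P k - P (k - 1)"
    using flag_type_eq_iff[OF c _ k(1)] by (auto simp: P_def)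
  moreover have "(\<Sum>Y\<in>pg_points. Tmat k c Y) = (\<Sum>Y\<in>{Y \<in> pg_points. flag_type c Y = k}. 1)"
    unfolding Tmat_def by (rule sum.inter_filter[symmetric]) simp
  ultimately have "(\<Sum>Y\<in>pg_points. Tmat k c Y) = real (card (P k - P (k - 1)))"
    by simp
  also have "\<dots> = real (card (P k)) - real (card (P (k - 1)))"
    using \<open>P (k - 1) \<subseteq> P k\<close> by (simp add: card_Diff_subset card_mono of_nat_diff)
  also have "\<dots> = ?q ^ (k - 1)"
  proof -
    have "(real (card (P k)) - real (card (P (k - 1)))) * (?q - 1) = ?q ^ (k - 1) * (?q - 1)"
      using card_P[of k] card_P[of "k - 1"] k by (cases k) (simp_all add: algebra_simps)
    moreover have "?q - 1 \<noteq> 0"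
      using card_field_ge_2[where 'a='a] by simp
    ultimately show ?thesis
      by simp
  qed
  finally show ?thesis .
qed

lemma sum_pg_points_transp_mult_Dmat:
  fixes A :: "('a::{finite,field} ^ 'n) set list \<Rightarrow> ('a ^ 'n) set \<Rightarrow> real"
  assumes "0 < i" "i < CARD('n)"
  shows "(\<Sum>Y\<in>pg_points. transp_mult A (Dmat i) X Y) = 0"
proof -
  have rows: "(\<Sum>Y\<in>pg_points. Dmat i c Y) = 0" if "c \<in> max_flags" for c :: "('a ^ 'n) set list"
    using sum_pg_points_Tmat[OF that, of i] sum_pg_points_Tmat[OF that, of "Suc i"] assms
    by (cases i) (simp_all add: Dmat_def sum_subtractf sum_distrib_left[symmetric])
  have "(\<Sum>Y\<in>pg_points. transp_mult A (Dmat i) X Y)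
      = (\<Sum>c\<in>max_flags. A c X * (\<Sum>Y\<in>pg_points. Dmat i c Y))"
    unfolding transp_mult_def sum_distrib_left by (rule sum.swap)
  then show ?thesis
    using rows by simp
qed

lemma transp_mult_Tmat_Dmat_diag_pos:
  fixes c :: "('a::{finite,field} ^ 'n) set list"
  assumes "c \<in> max_flags" "flag_type c X = s"
  shows "0 < transp_mult (Tmat s) (Dmat s) X X"
proof -
  have "0 < Tmat s c X * Dmat s c X"
    using assms(2) by (simp add: Tmat_def Dmat_def)
  moreover have "0 \<le> Tmat s c' X * Dmat s c' X" for c'
    by (simp add: Tmat_def Dmat_def)
  ultimately show ?thesis
    unfolding transp_mult_def by (rule sum_pos2[OF finite_max_flags assms(1)])
qed

lemma transp_mult_Tmat_Dmat_eq_E1mat: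
  assumes s: "0 < s" "s < CARD('n)"
  shows "\<exists>\<alpha>. \<alpha> \<noteq> 0 \<and> (\<forall>X\<in>(pg_points :: ('a::{finite,field} ^ 'n) set set). \<forall>Y\<in>pg_points.
           transp_mult (Tmat s) (Dmat s) X Y = \<alpha> * E1mat X Y)"
proof -
  obtain c0 :: "('a ^ 'n) set list" where c0: "c0 \<in> max_flags"
    using exists_max_flag by blast
  obtain X0 where X0: "X0 \<in> pg_points" "flag_type c0 X0 = s"
    using exists_point_of_flag_type[OF c0 s(1)] s(2) by auto
  have diag: "transp_mult (Tmat s) (Dmat s) X0 X0 \<noteq> 0"
    using transp_mult_Tmat_Dmat_diag_pos[OF c0 X0(2)] by simp
  have inv: "transp_mult (Tmat s) (Dmat s) X Y = transp_mult (Tmat s) (Dmat s) X' Y'"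
    if "X \<in> pg_points" "Y \<in> pg_points" "X' \<in> pg_points" "Y' \<in> pg_points" "X = Y \<longleftrightarrow> X' = Y'"
    for X Y X' Y' :: "('a ^ 'n) set"
    using that by (rule transp_mult_Tmat_Dmat_invariant)
  have rows: "(\<Sum>Y\<in>pg_points. transp_mult (Tmat s) (Dmat s) X Y) = 0" for X :: "('a ^ 'n) set"
    by (rule sum_pg_points_transp_mult_Dmat[OF s])
  show ?thesis
    using zero_row_sums_eq_centering[where M = "transp_mult (Tmat s) (Dmat s)",
        OF finite[of "pg_points :: ('a ^ 'n) set set"] X0(1) diag inv rows]
    unfolding E1mat_def .
qed

theorem mainTheorem6:
  fixes m :: nat
    and TYPE_ANCHOR :: "'a::{finite,field} ^ 'n"
  assumes "m \<ge> 1" and "CARD('n) = 2 * m"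
  shows "\<forall>j\<in>{1..m}.
     (\<exists>\<alpha>::real. \<alpha> \<noteq> 0 \<and>
        (\<forall>X\<in>(pg_points :: ('a ^ 'n) set set). \<forall>Y\<in>pg_points.
           transp_mult (Tmat (m - j + 1)) (Fmat m j) X Y = \<alpha> * E1mat X Y)) \<and>
     (\<forall>h. 1 \<le> h \<and> h < m - j + 1 \<longrightarrow>
        (\<forall>X\<in>(pg_points :: ('a ^ 'n) set set). \<forall>Y\<in>pg_points.
           transp_mult (Tmat h) (Fmat m j) X Y = 0))"
proof (intro ballI conjI allI impI)
  fix j assume j: "j \<in> {1..m}"
  then have "0 < m - j + 1" "m - j + 1 < CARD('n)"
    using assms by auto
  from transp_mult_Tmat_Dmat_eq_E1mat[OF this] obtain \<alpha> where "\<alpha> \<noteq> 0"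
    and \<alpha>: "\<forall>X\<in>(pg_points :: ('a ^ 'n) set set). \<forall>Y\<in>pg_points.
      transp_mult (Tmat (m - j + 1)) (Dmat (m - j + 1)) X Y = \<alpha> * E1mat X Y"
    by blast
  show "\<exists>\<alpha>::real. \<alpha> \<noteq> 0 \<and> (\<forall>X\<in>(pg_points :: ('a ^ 'n) set set). \<forall>Y\<in>pg_points.
      transp_mult (Tmat (m - j + 1)) (Fmat m j) X Y = \<alpha> * E1mat X Y)"
  proof (intro exI conjI ballI)
    show "real CARD('a) ^ (j - 1) * \<alpha> \<noteq> 0"
      using \<open>\<alpha> \<noteq> 0\<close> by simp
    fix X Y :: "('a ^ 'n) set" assume X: "X \<in> pg_points" and Y: "Y \<in> pg_points"
    have "0 < j" "j \<le> m"
      using j by auto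
    then show "transp_mult (Tmat (m - j + 1)) (Fmat m j) X Y = real CARD('a) ^ (j - 1) * \<alpha> * E1mat X Y"
      using transp_mult_Tmat_Fmat_at[OF X Y assms(2)] \<alpha>[rule_format, OF X Y] by simp
  qed
next
  fix j h and X Y :: "('a ^ 'n) set"
  assume "j \<in> {1..m}" "1 \<le> h \<and> h < m - j + 1" "X \<in> pg_points" "Y \<in> pg_points"
  then show "transp_mult (Tmat h) (Fmat m j) X Y = 0"
    by (intro transp_mult_Tmat_Fmat_below[OF _ _ assms(2)]) auto
qed

end
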